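(* Let $f:[0,\infty)\to\mathbb{R}$ be differentiable, let $0<a<b<\infty$, and suppose $f'$ is Lebesgue integrable on $[a,b]$. Let $(\alpha,m)\in(0,1]^2$ and $q>1$, and suppose $|f'|^q$ is $(\alpha,m)$-GA-convex on $[0,\max\{a^{1/m},b\}]$. Then \[ \biggl|\frac{b^2f(b)-a^2f(a)}{2}-\int_a^b xf(x)\,dx\biggr|\le\frac{\ln b-\ln a}{2}\Bigl\{m\bigl[L(a^{3q},b^{3q})-G(\alpha,3q)\bigr]\bigl|f'(a^{1/m})\bigr|^q+G(\alpha,3q)|f'(b)|^q\Bigr\}^{1/q}. \]
   Context: For $c>0$, $h:[0,c]\to\mathbb{R}$ and $(\alpha,m)\in(0,1]^2$, $h$ is called $(\alpha,m)$-GA-convex on $[0,c]$ if $h\bigl(x^\lambda y^{m(1-\lambda)}\bigr)\le\lambda^\alpha h(x)+m(1-\lambda^\alpha)h(y)$ for all $x,y\in[0,c]$ and all $\lambda\in[0,1]$ (with the convention $0^0=1$). For fixed $0<a<b$ and $\ell\ge0$, $\alpha>0$, set $G(\alpha,\ell)=\int_0^1 t^\alpha a^{\ell(1-t)}b^{\ell t}\,dt$. For $x,y>0$, $x\neq y$, the logarithmic mean is $L(x,y)=\frac{y-x}{\ln y-\ln x}$. *)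

theory Defs
  imports "HOL-Analysis.Analysis"
begin

text \<open>Real power with the convention 0 to the power 0 equals 1 (Isabelle's powr gives 0 there).\<close>
definition rpow :: "real \<Rightarrow> real \<Rightarrow> real" where
  "rpow x t = (if t = 0 then 1 else x powr t)"

definition GA_convex :: "real \<Rightarrow> real \<Rightarrow> real \<Rightarrow> (real \<Rightarrow> real) \<Rightarrow> bool" where
  "GA_convex \<alpha> m c h \<longleftrightarrow>
     (\<forall>x\<in>{0..c}. \<forall>y\<in>{0..c}. \<forall>t\<in>{0..1}.
        h (rpow x t * rpow y (m * (1 - t))) \<le> rpow t \<alpha> * h x + m * (1 - rpow t \<alpha>) * h y)"

definition GG :: "real \<Rightarrow> real \<Rightarrow> real \<Rightarrow> real \<Rightarrow> real" where
  "GG a b \<alpha> l = integral {0..1} (\<lambda>t. t powr \<alpha> * a powr (l * (1 - t)) * b powr (l * t))"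

definition logmean :: "real \<Rightarrow> real \<Rightarrow> real" where
  "logmean x y = (y - x) / (ln y - ln x)"

end

theory Submission
  imports Defs
begin

text \<open>
  Substituting \<open>x = a\<^sup>1\<^sup>-\<^sup>t b\<^sup>t\<close> turns the left-hand side into \<open>(ln b - ln a)/2\<close> times
  \<open>\<integral>\<^sub>0\<^sup>1 x\<^sup>3 f'(x) dt\<close>. Along this geometric path the GA-convexity of \<open>\<bar>f'\<bar>\<^sup>q\<close> bounds
  \<open>x\<^sup>3 \<bar>f'(x)\<bar>\<close> by the \<open>q\<close>-th root of an explicit weight \<open>w(t)\<close>, and concavity of \<open>y \<mapsto> y\<^sup>1\<^sup>/\<^sup>q\<close>
  (Jensen) moves the root outside the integral. The integral of \<open>w\<close> is computed in closed form:
  the exponential part integrates to a logarithmic mean, the rest is \<open>G(\<alpha>, 3q)\<close>.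
\<close>

lemma geometric_interpolation_eq_exp:
  fixes a b t :: real
  assumes "0 < a" "0 < b"
  shows "a powr (1 - t) * b powr t = exp (ln a + t * (ln b - ln a))"
  using assms by (simp add: powr_def exp_add[symmetric] algebra_simps)

lemma geometric_interpolation_derivative:
  fixes a b :: real
  assumes "0 < a" "0 < b"
  shows "((\<lambda>t. a powr (1 - t) * b powr t) has_real_derivative
            a powr (1 - t) * b powr t * (ln b - ln a)) (at t within S)"
  unfolding geometric_interpolation_eq_exp[OF assms]
  by (auto intro!: derivative_eq_intros)

lemma geometric_interpolation_mem:
  fixes a b t :: real
  assumes "0 < a" "a \<le> b" "t \<in> {0..1}"
  shows "a powr (1 - t) * b powr t \<in> {a..b}"
proof -
  have "a = a powr (1 - t) * a powr t" using assms by (simp add: powr_add[symmetric])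
  also have "\<dots> \<le> a powr (1 - t) * b powr t"
    using assms by (intro mult_left_mono powr_mono2) auto
  finally have lo: "a \<le> a powr (1 - t) * b powr t" .
  have "a powr (1 - t) * b powr t \<le> b powr (1 - t) * b powr t"
    using assms by (intro mult_right_mono powr_mono2) auto
  also have "\<dots> = b" using assms by (simp add: powr_add[symmetric])
  finally show ?thesis using lo by simp
qed

lemma has_integral_geometric_interpolation:
  fixes a b :: real
  assumes "0 < a" "0 < b" "a \<noteq> b"
  shows "((\<lambda>t. a powr (1 - t) * b powr t) has_integral (b - a) / (ln b - ln a)) {0..1}"
proof -
  have "ln b - ln a \<noteq> 0" using assms by simp
  then have "((\<lambda>t. a powr (1 - t) * b powr t) has_integral
      (\<lambda>t. a powr (1 - t) * b powr t / (ln b - ln a)) 1 - (\<lambda>t. a powr (1 - t) * b powr t / (ln b - ln a)) 0) {0..1}"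
    using DERIV_cdivide[OF geometric_interpolation_derivative[OF assms(1,2)], where c = "ln b - ln a"]
    by (intro fundamental_theorem_of_calculus)
       (auto simp: has_real_derivative_iff_has_vector_derivative[symmetric])
  then show ?thesis using assms by (simp add: diff_divide_distrib)
qed

lemma moment_antiderivative_deriv:
  fixes f f' :: "real \<Rightarrow> real"
  assumes f': "\<And>x. x \<in> {a..b} \<Longrightarrow> (f has_real_derivative f' x) (at x within {a..b})"
    and x: "x \<in> {a..b}"
  shows "((\<lambda>x. x\<^sup>2 * f x / 2 - integral {a..x} (\<lambda>s. s * f s)) has_real_derivative x\<^sup>2 * f' x / 2)
           (at x within {a..b})"
proof -
  have "continuous_on {a..b} f"
    unfolding continuous_on_eq_continuous_within using f' DERIV_continuous by blast
  then have "((\<lambda>x. integral {a..x} (\<lambda>s. s * f s)) has_real_derivative x * f x) (at x within {a..b})"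
    by (intro integral_has_real_derivative[OF _ x] continuous_intros)
  from DERIV_diff[OF DERIV_cdivide[OF DERIV_mult[OF DERIV_pow[of 2] f'[OF x]]] this]
  show ?thesis by (rule DERIV_cong) (simp add: power2_eq_square algebra_simps)
qed

lemma moment_identity_log_scale:
  fixes f f' :: "real \<Rightarrow> real"
  assumes ab: "0 < a" "a \<le> b"
    and f': "\<And>x. x \<in> {a..b} \<Longrightarrow> (f has_real_derivative f' x) (at x within {a..b})"
  shows "((\<lambda>t. (ln b - ln a) / 2 * ((a powr (1 - t) * b powr t) ^ 3 * f' (a powr (1 - t) * b powr t)))
           has_integral (b\<^sup>2 * f b - a\<^sup>2 * f a) / 2 - integral {a..b} (\<lambda>x. x * f x)) {0..1}"
proof -
  define \<phi> where "\<phi> t = a powr (1 - t) * b powr t" for t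
  define K where "K x = x\<^sup>2 * f x / 2 - integral {a..x} (\<lambda>s. s * f s)" for x
  have b: "0 < b" using ab by simp
  have \<phi>_mem: "\<phi> ` {0..1} \<subseteq> {a..b}"
    using geometric_interpolation_mem[OF ab] by (auto simp: \<phi>_def)
  have "((\<lambda>t. K (\<phi> t)) has_real_derivative (ln b - ln a) / 2 * (\<phi> t ^ 3 * f' (\<phi> t))) (at t within {0..1})"
    if "t \<in> {0..1}" for t
  proof -
    have "\<phi> t \<in> {a..b}" using \<phi>_mem that by blast
    then have "(K has_real_derivative (\<phi> t)\<^sup>2 * f' (\<phi> t) / 2) (at (\<phi> t) within \<phi> ` {0..1})"
      unfolding K_def by (intro DERIV_subset[OF _ \<phi>_mem] moment_antiderivative_deriv[OF f'])
    from DERIV_image_chain[OF this geometric_interpolation_derivative[OF ab(1) b, folded \<phi>_def]]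
    show ?thesis unfolding comp_def by (rule DERIV_cong) (simp add: power2_eq_square power3_eq_cube)
  qed
  then have "((\<lambda>t. (ln b - ln a) / 2 * (\<phi> t ^ 3 * f' (\<phi> t))) has_integral K (\<phi> 1) - K (\<phi> 0)) {0..1}"
    by (intro fundamental_theorem_of_calculus) (auto simp: has_real_derivative_iff_has_vector_derivative)
  moreover have "K (\<phi> 1) - K (\<phi> 0) = (b\<^sup>2 * f b - a\<^sup>2 * f a) / 2 - integral {a..b} (\<lambda>x. x * f x)"
    using ab by (simp add: \<phi>_def K_def diff_divide_distrib)
  ultimately show ?thesis by (simp add: \<phi>_def)
qed

lemma rpow_pos_base: "0 < x \<Longrightarrow> rpow x t = x powr t"
  by (simp add: rpow_def)

lemma GA_convex_geometric_interpolation: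
  fixes h :: "real \<Rightarrow> real"
  assumes conv: "GA_convex \<alpha> m c h"
    and ab: "0 < a" "0 < b" "a powr (1 / m) \<le> c" "b \<le> c"
    and "0 < \<alpha>" "m \<noteq> 0" "t \<in> {0..1}"
  shows "h (a powr (1 - t) * b powr t) \<le> t powr \<alpha> * h b + m * (1 - t powr \<alpha>) * h (a powr (1 / m))"
proof -
  have "h (rpow b t * rpow (a powr (1 / m)) (m * (1 - t)))
      \<le> rpow t \<alpha> * h b + m * (1 - rpow t \<alpha>) * h (a powr (1 / m))"
    using conv assms unfolding GA_convex_def by auto
  moreover have "rpow b t * rpow (a powr (1 / m)) (m * (1 - t)) = a powr (1 - t) * b powr t"
    using assms by (simp add: rpow_pos_base powr_powr)
  moreover have "rpow t \<alpha> = t powr \<alpha>"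
    using assms by (simp add: rpow_def)
  ultimately show ?thesis by simp
qed

lemma has_integral_GA_bound:
  fixes a b \<alpha> l m A B :: real
  assumes ab: "0 < a" "a < b" and l: "0 < l" and \<alpha>: "0 < \<alpha>"
  shows "((\<lambda>t. (a powr (1 - t) * b powr t) powr l * (t powr \<alpha> * B + m * (1 - t powr \<alpha>) * A))
           has_integral m * (logmean (a powr l) (b powr l) - GG a b \<alpha> l) * A + GG a b \<alpha> l * B) {0..1}"
proof -
  define k where "k t = (a powr l) powr (1 - t) * (b powr l) powr t" for t
  have k_eq: "k t = a powr (l * (1 - t)) * b powr (l * t)" for t
    by (simp add: k_def powr_powr mult.commute)
  have \<phi>_powr: "(a powr (1 - t) * b powr t) powr l = k t" for t
    using ab by (simp add: k_eq powr_mult powr_powr mult.commute)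
  have "(k has_integral logmean (a powr l) (b powr l)) {0..1}"
    unfolding k_def logmean_def using ab l powr_less_mono2[of l a b]
    by (intro has_integral_geometric_interpolation) auto
  moreover have "((\<lambda>t. t powr \<alpha> * k t) has_integral GG a b \<alpha> l) {0..1}"
  proof -
    have "continuous_on {0..1} (\<lambda>t. t powr \<alpha> * k t)"
      unfolding k_def using ab \<alpha> by (intro continuous_intros continuous_on_powr') auto
    moreover have "GG a b \<alpha> l = integral {0..1} (\<lambda>t. t powr \<alpha> * k t)"
      by (simp add: GG_def k_eq mult.assoc)
    ultimately show ?thesis
      by (simp add: integrable_continuous_real integrable_integral)
  qed
  ultimately have "((\<lambda>t. B * (t powr \<alpha> * k t) + m * A * k t - m * A * (t powr \<alpha> * k t)) has_integral
      B * GG a b \<alpha> l + m * A * logmean (a powr l) (b powr l) - m * A * GG a b \<alpha> l) {0..1}"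
    by (intro has_integral_diff has_integral_add has_integral_mult_right)
  then show ?thesis
    unfolding \<phi>_powr by (simp add: algebra_simps)
qed

lemma abs_power_mult_le_root:
  fixes x y w q :: real
  assumes "0 < x" "0 < q" "\<bar>y\<bar> powr q \<le> w"
  shows "\<bar>x ^ n * y\<bar> \<le> (x powr (n * q) * w) powr (1 / q)"
proof -
  have "\<bar>x ^ n * y\<bar> = (x powr (n * q)) powr (1 / q) * (\<bar>y\<bar> powr q) powr (1 / q)"
    using assms by (simp add: powr_powr abs_mult powr_realpow)
  also have "\<dots> = (x powr (n * q) * \<bar>y\<bar> powr q) powr (1 / q)"
    by (simp add: powr_mult)
  also have "\<dots> \<le> (x powr (n * q) * w) powr (1 / q)"
    using assms by (intro powr_mono2 mult_left_mono) auto
  finally show ?thesis .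
qed

lemma GA_convex_weighted_root_bound:
  fixes f' :: "real \<Rightarrow> real" and a b c t \<alpha> m q :: real and n :: nat
  assumes conv: "GA_convex \<alpha> m c (\<lambda>x. \<bar>f' x\<bar> powr q)"
    and "0 < a" "0 < b" "a powr (1 / m) \<le> c" "b \<le> c" "0 < \<alpha>" "0 < m" "0 < q" "t \<in> {0..1}"
  defines "x \<equiv> a powr (1 - t) * b powr t"
  shows "\<bar>x ^ n * f' x\<bar> \<le> (x powr (n * q) *
      (t powr \<alpha> * \<bar>f' b\<bar> powr q + m * (1 - t powr \<alpha>) * \<bar>f' (a powr (1 / m))\<bar> powr q)) powr (1 / q)"
    and "0 \<le> x powr (n * q) *
      (t powr \<alpha> * \<bar>f' b\<bar> powr q + m * (1 - t powr \<alpha>) * \<bar>f' (a powr (1 / m))\<bar> powr q)"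
proof -
  have bound: "\<bar>f' x\<bar> powr q
      \<le> t powr \<alpha> * \<bar>f' b\<bar> powr q + m * (1 - t powr \<alpha>) * \<bar>f' (a powr (1 / m))\<bar> powr q"
    unfolding x_def using assms by (intro GA_convex_geometric_interpolation[OF conv]) auto
  have "0 < x" using assms by (simp add: x_def)
  then show "\<bar>x ^ n * f' x\<bar> \<le> (x powr (n * q) *
      (t powr \<alpha> * \<bar>f' b\<bar> powr q + m * (1 - t powr \<alpha>) * \<bar>f' (a powr (1 / m))\<bar> powr q)) powr (1 / q)"
    using assms(8) by (rule abs_power_mult_le_root[OF _ _ bound])
  show "0 \<le> x powr (n * q) *
      (t powr \<alpha> * \<bar>f' b\<bar> powr q + m * (1 - t powr \<alpha>) * \<bar>f' (a powr (1 / m))\<bar> powr q)"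
    using order_trans[OF powr_ge_zero bound] by simp
qed

lemma powr_le_tangent_line:
  fixes y K p :: real
  assumes "0 \<le> y" "0 < K" "0 < p" "p \<le> 1"
  shows "y powr p \<le> K powr p * (p * y / K + (1 - p))"
proof (cases "y = 0")
  case True
  then show ?thesis using assms by simp
next
  case False
  then have "(y / K) powr p * 1 powr (1 - p) \<le> p * (y / K) + (1 - p) * 1"
    using assms by (intro Youngs_inequality_0) auto
  then have "K powr p * (y / K) powr p \<le> K powr p * (p * y / K + (1 - p))"
    by (simp add: mult_left_mono)
  then show ?thesis using assms by (simp add: powr_divide)
qed

lemma integral_powr_le_powr_integral:
  fixes h :: "real \<Rightarrow> real" and p :: real
  assumes cont: "continuous_on {0..1} h" and nonneg: "\<And>t. t \<in> {0..1} \<Longrightarrow> 0 \<le> h t"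
    and p: "0 < p" "p \<le> 1"
  shows "integral {0..1} (\<lambda>t. h t powr p) \<le> integral {0..1} h powr p"
proof -
  have h_int: "h integrable_on {0..1}"
    using cont by (rule integrable_continuous_real)
  have hp_int: "(\<lambda>t. h t powr p) integrable_on {0..1}"
    using cont nonneg p by (intro integrable_continuous_real continuous_on_powr') auto
  have bound: "integral {0..1} (\<lambda>t. h t powr p) \<le> K powr p"
    if K: "0 < K" "integral {0..1} h \<le> K" for K
  proof -
    have "integral {0..1} (\<lambda>t. h t powr p) \<le> integral {0..1} (\<lambda>t. K powr p * (p * h t / K + (1 - p)))"
    proof (rule integral_le[OF hp_int])
      show "(\<lambda>t. K powr p * (p * h t / K + (1 - p))) integrable_on {0..1}"
        using K by (intro integrable_continuous_real continuous_intros cont) auto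
      show "h t powr p \<le> K powr p * (p * h t / K + (1 - p))" if "t \<in> {0..1}" for t
        using powr_le_tangent_line[OF nonneg[OF that] K(1) p] .
    qed
    also have "\<dots> = K powr p * (p * integral {0..1} h / K + (1 - p))"
    proof -
      have "((\<lambda>t. p * h t / K + (1 - p)) has_integral p * integral {0..1} h / K + (1 - p)) {0..1}"
        using has_integral_add[OF has_integral_divide[OF has_integral_mult_right[OF integrable_integral[OF h_int]]]
            has_integral_const_real[of "1 - p" 0 1]]
        by (simp add: mult.commute)
      then show ?thesis by (simp add: integral_unique)
    qed
    also have "\<dots> \<le> K powr p * (p * K / K + (1 - p))"
      using K p by (intro mult_left_mono add_right_mono divide_right_mono) auto
    finally show ?thesis using K by simp
  qed
  have "integral {0..1} h \<ge> 0"
    using nonneg h_int by (intro integral_nonneg) auto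
  moreover have "integral {0..1} (\<lambda>t. h t powr p) \<le> 0" if "integral {0..1} h = 0"
  proof (rule field_le_epsilon)
    fix e :: real assume "0 < e"
    then show "integral {0..1} (\<lambda>t. h t powr p) \<le> 0 + e"
      using bound[of "e powr (1 / p)"] that p by (simp add: powr_powr)
  qed
  ultimately show ?thesis
    using bound[of "integral {0..1} h"] by (cases "integral {0..1} h = 0") auto
qed

lemma abs_integral_le_powr_integral:
  fixes g h :: "real \<Rightarrow> real" and q :: real
  assumes g: "g integrable_on {0..1}"
    and h: "continuous_on {0..1} h" "\<And>t. t \<in> {0..1} \<Longrightarrow> 0 \<le> h t"
    and le: "\<And>t. t \<in> {0..1} \<Longrightarrow> \<bar>g t\<bar> \<le> h t powr (1 / q)"
    and q: "1 \<le> q"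
  shows "\<bar>integral {0..1} g\<bar> \<le> integral {0..1} h powr (1 / q)"
proof -
  have "(\<lambda>t. h t powr (1 / q)) integrable_on {0..1}"
    using h q by (intro integrable_continuous_real continuous_on_powr' continuous_intros) auto
  then have "\<bar>integral {0..1} g\<bar> \<le> integral {0..1} (\<lambda>t. h t powr (1 / q))"
    using integral_norm_bound_integral[OF g] le by simp
  also have "\<dots> \<le> integral {0..1} h powr (1 / q)"
    using h q by (intro integral_powr_le_powr_integral) auto
  finally show ?thesis .
qed

theorem theorem3p3:
  fixes f f' :: "real \<Rightarrow> real" and a b \<alpha> m q :: real
  assumes deriv: "\<And>x. x \<ge> 0 \<Longrightarrow> (f has_real_derivative f' x) (at x within {0..})"
    and ab: "0 < a" "a < b"
    and integ: "set_integrable lborel {a..b} f'"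
    and alpha: "0 < \<alpha>" "\<alpha> \<le> 1"
    and m: "0 < m" "m \<le> 1"
    and q: "q > 1"
    and conv: "GA_convex \<alpha> m (max (a powr (1/m)) b) (\<lambda>x. \<bar>f' x\<bar> powr q)"
  shows "\<bar>(b\<^sup>2 * f b - a\<^sup>2 * f a) / 2 - integral {a..b} (\<lambda>x. x * f x)\<bar>
    \<le> (ln b - ln a) / 2 *
       (m * (logmean (a powr (3*q)) (b powr (3*q)) - GG a b \<alpha> (3*q)) * \<bar>f' (a powr (1/m))\<bar> powr q
        + GG a b \<alpha> (3*q) * \<bar>f' b\<bar> powr q) powr (1/q)"
proof -
  define \<phi> where "\<phi> t = a powr (1 - t) * b powr t" for t
  define g where "g t = \<phi> t ^ 3 * f' (\<phi> t)" for t
  define w where "w t = \<phi> t powr (3 * q) *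
    (t powr \<alpha> * \<bar>f' b\<bar> powr q + m * (1 - t powr \<alpha>) * \<bar>f' (a powr (1/m))\<bar> powr q)" for t
  define c where "c = (ln b - ln a) / 2"
  have c: "0 < c" using ab by (simp add: c_def)
  have "((\<lambda>t. c * g t) has_integral (b\<^sup>2 * f b - a\<^sup>2 * f a) / 2 - integral {a..b} (\<lambda>x. x * f x)) {0..1}"
    unfolding c_def g_def \<phi>_def using ab
    by (intro moment_identity_log_scale DERIV_subset[OF deriv]) auto
  then have g_int: "g integrable_on {0..1}"
    and lhs: "(b\<^sup>2 * f b - a\<^sup>2 * f a) / 2 - integral {a..b} (\<lambda>x. x * f x) = c * integral {0..1} g"
    using c integrable_on_cmult_iff[of c g] by (auto simp: has_integral_iff)
  have g_le_w: "\<bar>g t\<bar> \<le> w t powr (1 / q)" and w_nonneg: "0 \<le> w t" if "t \<in> {0..1}" for t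
    unfolding g_def w_def \<phi>_def using ab alpha m q that
    by (auto intro!: GA_convex_weighted_root_bound[OF conv, where n = 3, simplified])
  have w_cont: "continuous_on {0..1} w"
    unfolding w_def \<phi>_def using ab alpha by (intro continuous_intros continuous_on_powr') auto
  have "\<bar>integral {0..1} g\<bar> \<le> integral {0..1} w powr (1 / q)"
    using g_int w_cont w_nonneg g_le_w q by (intro abs_integral_le_powr_integral) auto
  moreover have "integral {0..1} w = m * (logmean (a powr (3*q)) (b powr (3*q)) - GG a b \<alpha> (3*q))
      * \<bar>f' (a powr (1/m))\<bar> powr q + GG a b \<alpha> (3*q) * \<bar>f' b\<bar> powr q"
    unfolding w_def \<phi>_def using ab alpha q by (intro integral_unique has_integral_GA_bound) auto
  ultimately show ?thesis
    using c unfolding lhs c_def[symmetric] by (simp add: abs_mult)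
qed

end
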